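(* Let $\boldsymbol X \in \mathbb{R}^{n\times d}$, $\boldsymbol y \in \mathbb{R}^n$, $\boldsymbol M = \boldsymbol X^\top \boldsymbol X$, $\boldsymbol r = \boldsymbol X^\top \boldsymbol y$. Assume (A1) $\boldsymbol r > \mathbf 0$ and (A2) $M_{ij}\le 0$ for all $i\neq j$. Consider the ODE $$\frac{\mathrm d \theta_i}{\mathrm d t} = \theta_i\Big(r_i - \sum_{j=1}^d M_{ij}\theta_j\Big),\quad i=1,\dots,d.$$ For every $I\subset\{1,\dots,d\}$, the matrix $\boldsymbol M_{II}$ is invertible and there exists a unique fixed point $\boldsymbol\theta\ge\mathbf 0$ of this ODE whose support $\{i:\theta_i>0\}$ equals $I$; it is given by $\boldsymbol\theta_I = (\boldsymbol M_{II})^{-1}\boldsymbol r_I$ and $\boldsymbol\theta_{I^c}=\mathbf 0$. There are thus $2^d$ fixed points of the ODE.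
   Context: Vector inequalities are coordinatewise. For $I\subset\{1,\dots,d\}$, $I^c$ is its complement, $\boldsymbol\theta_I$ is the subvector of coordinates in $I$, and $\boldsymbol M_{II}$ is the principal submatrix with rows and columns indexed by $I$. *)

theory Defs
  imports "Jordan_Normal_Form.DL_Submatrix" "Jordan_Normal_Form.Gauss_Jordan_Elimination"
begin

text \<open>Indices are 0-based: coordinates of vectors in R^d are 0..<d.\<close>

definition vec_restr :: "'a vec \<Rightarrow> nat set \<Rightarrow> 'a vec" where
  "vec_restr v I = vec (card {i. i < dim_vec v \<and> i \<in> I}) (\<lambda>k. v $ pick I k)"

definition ode_field :: "nat \<Rightarrow> real mat \<Rightarrow> real vec \<Rightarrow> real vec \<Rightarrow> real vec" where
  "ode_field d M r \<theta> = vec d (\<lambda>i. \<theta> $ i * (r $ i - (\<Sum>j<d. M $$ (i, j) * \<theta> $ j)))"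

definition is_fixed_point :: "nat \<Rightarrow> real mat \<Rightarrow> real vec \<Rightarrow> real vec \<Rightarrow> bool" where
  "is_fixed_point d M r \<theta> \<longleftrightarrow> \<theta> \<in> carrier_vec d \<and> ode_field d M r \<theta> = 0\<^sub>v d"

definition nonneg_vec :: "nat \<Rightarrow> real vec \<Rightarrow> bool" where
  "nonneg_vec d \<theta> \<longleftrightarrow> (\<forall>i<d. \<theta> $ i \<ge> 0)"

definition supp_vec :: "nat \<Rightarrow> real vec \<Rightarrow> nat set" where
  "supp_vec d \<theta> = {i. i < d \<and> \<theta> $ i > 0}"

end

theory Submission
  imports Defs "Jordan_Normal_Form.Determinant"
begin

(* A fixed point theta >= 0 with support I is a vector vanishing off I whose restriction
   satisfies M_II theta_I = r_I and theta_I > 0. If Z consists of the columns of X indexed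
   by I, then M_II = Z^T Z and r_I = Z^T y, so it suffices to show: a Gram matrix G = Z^T Z
   with nonpositive off-diagonal entries is invertible, and G^-1 s > 0 for s = Z^T y > 0.
   If G v = 0, the sign pattern gives |v|^T G |v| <= v^T G v = 0, hence Z |v| = 0 and
   s . |v| = y . Z |v| = 0, which forces v = 0 as s > 0. If G w = s, split w = p - u into
   nonnegative parts with disjoint supports: s . u = u^T G p - u^T G u <= 0 forces u = 0,
   and a zero entry w_i would give s_i = sum_{j ~= i} G_ij w_j <= 0.
   Finally, the nonnegative fixed points correspond to their supports, so there are 2^d. *)

section \<open>Restriction to and extension from an index set\<close>

lemma card_less_in_set:
  fixes J :: "nat set"
  assumes "finite J" "j \<in> J"
  shows "card {a\<in>J. a < j} < card J"
proof -
  have "card {a\<in>J. a < j} \<le> card (J - {j})"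
    using assms(1) by (intro card_mono) auto
  also have "\<dots> < card J"
    using assms by (rule card_Diff1_less)
  finally show ?thesis .
qed

lemma sum_pick:
  assumes "finite J"
  shows "(\<Sum>k<card J. g (pick J k)) = sum g J"
  by (rule sum.reindex_bij_witness[where i = "\<lambda>j. card {a\<in>J. a < j}" and j = "pick J"])
    (use assms in \<open>auto simp: pick_in_set_le card_pick_le pick_card_in_set card_less_in_set\<close>)

lemma restrict_lessThan_eq: "J \<subseteq> {..<n} \<Longrightarrow> {j. j < n \<and> j \<in> J} = J"
  by auto

text \<open>\<open>card {a\<in>J. a < j}\<close> is the position of \<open>j\<close> in \<open>J\<close>, i.e. the inverse of \<open>pick J\<close>.\<close>

definition vec_extend :: "nat \<Rightarrow> nat set \<Rightarrow> 'a :: zero vec \<Rightarrow> 'a vec" where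
  "vec_extend n J w = vec n (\<lambda>j. if j \<in> J then w $ card {a\<in>J. a < j} else 0)"

lemma vec_restr_vec_extend:
  assumes J: "J \<subseteq> {..<n}" and w: "w \<in> carrier_vec (card J)"
  shows "vec_restr (vec_extend n J w) J = w"
proof (rule eq_vecI)
  show "dim_vec (vec_restr (vec_extend n J w) J) = dim_vec w"
    using w by (simp add: vec_restr_def vec_extend_def restrict_lessThan_eq[OF J])
  fix k assume "k < dim_vec w"
  then have k: "k < card J" using w by simp
  moreover have "finite J" using J finite_subset by blast
  ultimately have "pick J k \<in> J" "card {a\<in>J. a < pick J k} = k"
    using pick_in_set_le card_pick_le by blast+
  with k J show "vec_restr (vec_extend n J w) J $ k = w $ k"
    by (auto simp: vec_restr_def vec_extend_def restrict_lessThan_eq[OF J])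
qed

lemma vec_extend_vec_restr:
  assumes J: "J \<subseteq> {..<n}" and v: "v \<in> carrier_vec n"
    and vanish: "\<forall>j<n. j \<notin> J \<longrightarrow> v $ j = 0"
  shows "vec_extend n J (vec_restr v J) = v"
proof (rule eq_vecI)
  fix j assume "j < dim_vec v"
  then have j: "j < n" using v by simp
  have "finite J" using J finite_subset by blast
  then have "card {a\<in>J. a < j} < card J \<and> pick J (card {a\<in>J. a < j}) = j" if "j \<in> J"
    using that card_less_in_set pick_card_in_set by blast
  with j v vanish show "vec_extend n J (vec_restr v J) $ j = v $ j"
    by (auto simp: vec_restr_def vec_extend_def restrict_lessThan_eq[OF J])
qed (use v in \<open>simp add: vec_extend_def\<close>)

lemma vec_restr_eq_iff:
  assumes J: "J \<subseteq> {..<n}" and u: "u \<in> carrier_vec n" and v: "v \<in> carrier_vec n"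
  shows "vec_restr u J = vec_restr v J \<longleftrightarrow> (\<forall>j\<in>J. u $ j = v $ j)"
proof
  assume eq: "vec_restr u J = vec_restr v J"
  show "\<forall>j\<in>J. u $ j = v $ j"
  proof
    fix j assume "j \<in> J"
    moreover have "finite J" using J finite_subset by blast
    ultimately have "card {a\<in>J. a < j} < card J" "pick J (card {a\<in>J. a < j}) = j"
      using card_less_in_set pick_card_in_set by blast+
    with arg_cong[OF eq, of "\<lambda>w. w $ card {a\<in>J. a < j}"] u v show "u $ j = v $ j"
      by (simp add: vec_restr_def restrict_lessThan_eq[OF J])
  qed
next
  assume eq: "\<forall>j\<in>J. u $ j = v $ j"
  have "finite J" using J finite_subset by blast
  then have "u $ pick J k = v $ pick J k" if "k < card J" for k
    using that eq pick_in_set_le by blast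
  with u v show "vec_restr u J = vec_restr v J"
    by (intro eq_vecI) (simp_all add: vec_restr_def restrict_lessThan_eq[OF J])
qed

lemma vec_restr_carrier:
  assumes "v \<in> carrier_vec n" "J \<subseteq> {..<n}"
  shows "vec_restr v J \<in> carrier_vec (card J)"
  using assms by (simp add: vec_restr_def restrict_lessThan_eq)

lemma submatrix_carrier_mat:
  assumes "A \<in> carrier_mat m n" "I \<subseteq> {..<m}" "J \<subseteq> {..<n}"
  shows "submatrix A I J \<in> carrier_mat (card I) (card J)"
  using assms by (intro carrier_matI) (simp_all add: dim_submatrix restrict_lessThan_eq)

lemma submatrix_mult:
  assumes "dim_col A = dim_row B"
  shows "submatrix (A * B) I J = submatrix A I UNIV * submatrix B UNIV J"
  using assms pick_le by (intro eq_matI) (auto simp: submatrix_def pick_UNIV scalar_prod_def)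

lemma submatrix_transpose: "submatrix (transpose_mat A) I J = transpose_mat (submatrix A J I)"
  using pick_le by (intro eq_matI) (auto simp: submatrix_def)

lemma vec_restr_mult_mat_vec:
  assumes "v \<in> carrier_vec (dim_col A)"
  shows "vec_restr (A *\<^sub>v v) I = submatrix A I UNIV *\<^sub>v v"
  using assms pick_le by (intro eq_vecI) (auto simp: vec_restr_def submatrix_def pick_UNIV scalar_prod_def)

lemma submatrix_gram:
  "submatrix (transpose_mat X * X) I I = transpose_mat (submatrix X UNIV I) * submatrix X UNIV I"
  by (simp add: submatrix_mult submatrix_transpose)

lemma vec_restr_transpose_mult_mat_vec:
  assumes "y \<in> carrier_vec (dim_row X)"
  shows "vec_restr (transpose_mat X *\<^sub>v y) I = transpose_mat (submatrix X UNIV I) *\<^sub>v y"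
  using assms by (simp add: vec_restr_mult_mat_vec submatrix_transpose)

lemma pick_eq_iff:
  assumes "a < card I" "b < card I"
  shows "pick I a = pick I b \<longleftrightarrow> a = b"
  by (metis assms card_pick_le)

lemma submatrix_offdiag_nonpos:
  fixes A :: "'a :: {zero, ord} mat"
  assumes A: "A \<in> carrier_mat n n" and offdiag: "\<forall>i<n. \<forall>j<n. i \<noteq> j \<longrightarrow> A $$ (i, j) \<le> 0"
    and I: "I \<subseteq> {..<n}"
  shows "\<forall>a<card I. \<forall>b<card I. a \<noteq> b \<longrightarrow> submatrix A I I $$ (a, b) \<le> 0"
  using A I offdiag pick_in_set_le pick_eq_iff
  by (auto simp: submatrix_index restrict_lessThan_eq subset_eq)

lemma vec_restr_pos:
  fixes v :: "'a :: {zero, ord} vec"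
  assumes "v \<in> carrier_vec n" "\<forall>i<n. v $ i > 0" "I \<subseteq> {..<n}"
  shows "\<forall>k<card I. vec_restr v I $ k > 0"
  using assms pick_in_set_le by (auto simp: vec_restr_def restrict_lessThan_eq subset_eq)

lemma mult_mat_vec_vanishing_outside:
  assumes A: "A \<in> carrier_mat m n" and v: "v \<in> carrier_vec n" and J: "J \<subseteq> {..<n}"
    and vanish: "\<forall>j<n. j \<notin> J \<longrightarrow> v $ j = 0"
  shows "A *\<^sub>v v = submatrix A UNIV J *\<^sub>v vec_restr v J"
proof (rule eq_vecI)
  have fin: "finite J" using J finite_subset by blast
  fix i assume "i < dim_vec (submatrix A UNIV J *\<^sub>v vec_restr v J)"
  then have i: "i < m" using A by (simp add: dim_submatrix)
  have "(A *\<^sub>v v) $ i = (\<Sum>j<n. A $$ (i, j) * v $ j)"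
    using A v i by (simp add: scalar_prod_def lessThan_atLeast0)
  also have "\<dots> = (\<Sum>j\<in>J. A $$ (i, j) * v $ j)"
    using J vanish by (intro sum.mono_neutral_right) auto
  also have "\<dots> = (\<Sum>k<card J. A $$ (i, pick J k) * v $ pick J k)"
    by (rule sum_pick[OF fin, symmetric])
  also have "\<dots> = (submatrix A UNIV J *\<^sub>v vec_restr v J) $ i"
    using A v i J fin pick_in_set_le
    by (auto simp: submatrix_def vec_restr_def pick_UNIV scalar_prod_def restrict_lessThan_eq
        lessThan_atLeast0 intro!: sum.cong)
  finally show "(A *\<^sub>v v) $ i = (submatrix A UNIV J *\<^sub>v vec_restr v J) $ i" .
qed (use A in \<open>simp add: dim_submatrix\<close>)

lemma vec_restr_mult_mat_vec_vanishing_outside: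
  assumes A: "A \<in> carrier_mat m n" and v: "v \<in> carrier_vec n" and J: "J \<subseteq> {..<n}"
    and vanish: "\<forall>j<n. j \<notin> J \<longrightarrow> v $ j = 0"
  shows "vec_restr (A *\<^sub>v v) I = submatrix A I J *\<^sub>v vec_restr v J"
proof -
  have "vec_restr (A *\<^sub>v v) I = vec_restr (submatrix A UNIV J *\<^sub>v vec_restr v J) I"
    using mult_mat_vec_vanishing_outside[OF assms] by simp
  also have "\<dots> = submatrix (submatrix A UNIV J) I UNIV *\<^sub>v vec_restr v J"
    using A v by (intro vec_restr_mult_mat_vec) (simp add: vec_restr_def dim_submatrix)
  also have "\<dots> = submatrix A I J *\<^sub>v vec_restr v J"
    by (simp only: submatrix_split[symmetric])
  finally show ?thesis .
qed

section \<open>Gram matrices with nonpositive off-diagonal entries\<close>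

lemma mat_inverse_if_kernel_trivial:
  fixes A :: "'a :: field mat"
  assumes A: "A \<in> carrier_mat n n"
    and kernel: "\<And>v. v \<in> carrier_vec n \<Longrightarrow> A *\<^sub>v v = 0\<^sub>v n \<Longrightarrow> v = 0\<^sub>v n"
  obtains B where "mat_inverse A = Some B" "A * B = 1\<^sub>m n" "B * A = 1\<^sub>m n" "B \<in> carrier_mat n n"
proof -
  have "det A \<noteq> 0" using det_0_iff_vec_prod_zero_field[OF A] kernel by blast
  then have "A \<in> Units (ring_mat TYPE('a) n ())" by (rule det_non_zero_imp_unit[OF A])
  then have "mat_inverse A \<noteq> None" using mat_inverse(1)[OF A, of "()"] by blast
  then obtain B where "mat_inverse A = Some B" by blast
  with mat_inverse(2)[OF A] that show ?thesis by blast
qed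

lemma invertible_mat_if_inverse:
  assumes "A \<in> carrier_mat n n" "A * B = 1\<^sub>m n" "B * A = 1\<^sub>m n" "B \<in> carrier_mat n n"
  shows "invertible_mat A"
  using assms unfolding invertible_mat_def inverts_mat_def by auto

lemma scalar_prod_mult_mat_vec_double_sum:
  assumes "A \<in> carrier_mat m n" "u \<in> carrier_vec m" "v \<in> carrier_vec n"
  shows "u \<bullet> (A *\<^sub>v v) = (\<Sum>i<m. \<Sum>j<n. u $ i * A $$ (i, j) * v $ j)"
  using assms by (simp add: scalar_prod_def lessThan_atLeast0 sum_distrib_left mult.assoc)

lemma scalar_prod_self_nonneg: "0 \<le> (v :: real vec) \<bullet> v"
  by (simp add: scalar_prod_def sum_nonneg)

lemma scalar_prod_self_eq_0:
  assumes "(v :: real vec) \<bullet> v = 0"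
  shows "v = 0\<^sub>v (dim_vec v)"
proof (rule eq_vecI)
  fix i assume "i < dim_vec (0\<^sub>v (dim_vec v) :: real vec)"
  moreover have "\<forall>i\<in>{0..<dim_vec v}. v $ i * v $ i = 0"
    using assms sum_nonneg_eq_0_iff[of "{0..<dim_vec v}" "\<lambda>i. v $ i * v $ i"]
    by (simp add: scalar_prod_def)
  ultimately show "v $ i = 0\<^sub>v (dim_vec v) $ i" by simp
qed simp

lemma gram_quadratic_form:
  fixes Z :: "'a :: comm_semiring_0 mat"
  assumes Z: "Z \<in> carrier_mat n m" and v: "v \<in> carrier_vec m"
  shows "v \<bullet> ((transpose_mat Z * Z) *\<^sub>v v) = (Z *\<^sub>v v) \<bullet> (Z *\<^sub>v v)"
proof -
  have "v \<bullet> ((transpose_mat Z * Z) *\<^sub>v v) = v \<bullet> (transpose_mat Z *\<^sub>v (Z *\<^sub>v v))"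
    using Z v by simp
  also have "\<dots> = (transpose_mat Z *\<^sub>v (Z *\<^sub>v v)) \<bullet> v"
    using Z by (intro comm_scalar_prod[OF v]) (simp add: carrier_vecI)
  also have "\<dots> = (Z *\<^sub>v v) \<bullet> (Z *\<^sub>v v)"
    using Z v by (simp add: transpose_vec_mult_scalar)
  finally show ?thesis .
qed

lemma gram_quadratic_form_nonneg:
  fixes Z :: "real mat"
  assumes "Z \<in> carrier_mat n m"
  shows "\<forall>v\<in>carrier_vec m. 0 \<le> v \<bullet> ((transpose_mat Z * Z) *\<^sub>v v)"
  using assms by (simp add: gram_quadratic_form scalar_prod_self_nonneg del: assoc_mult_mat_vec)

lemma eq_0_if_pos_scalar_prod_nonpos:
  fixes s g :: "real vec"
  assumes s: "s \<in> carrier_vec m" "\<forall>i<m. s $ i > 0"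
    and g: "g \<in> carrier_vec m" "nonneg_vec m g" and sg: "s \<bullet> g \<le> 0"
  shows "g = 0\<^sub>v m"
proof -
  have terms_nonneg: "0 \<le> s $ i * g $ i" if "i \<in> {0..<m}" for i
    using s g that by (intro mult_nonneg_nonneg) (auto simp: nonneg_vec_def less_imp_le)
  then have "0 \<le> s \<bullet> g"
    using g unfolding scalar_prod_def by (auto intro!: sum_nonneg)
  with sg have "s \<bullet> g = 0" by linarith
  then have "\<forall>i\<in>{0..<m}. s $ i * g $ i = 0"
    using sum_nonneg_eq_0_iff[OF finite_atLeastLessThan terms_nonneg] g by (simp add: scalar_prod_def)
  then have "g $ i = 0" if "i < m" for i
  proof -
    have "s $ i * g $ i = 0" using that \<open>\<forall>i\<in>{0..<m}. s $ i * g $ i = 0\<close> by simp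
    moreover have "s $ i \<noteq> 0" using s(2) that by fastforce
    ultimately show ?thesis by simp
  qed
  with g show ?thesis by (intro eq_vecI) simp_all
qed

lemma abs_quadratic_form_le:
  fixes A :: "real mat"
  assumes A: "A \<in> carrier_mat m m" and offdiag: "\<forall>i<m. \<forall>j<m. i \<noteq> j \<longrightarrow> A $$ (i, j) \<le> 0"
    and v: "v \<in> carrier_vec m"
  shows "map_vec abs v \<bullet> (A *\<^sub>v map_vec abs v) \<le> v \<bullet> (A *\<^sub>v v)"
proof -
  have "\<bar>v $ i\<bar> * A $$ (i, j) * \<bar>v $ j\<bar> \<le> v $ i * A $$ (i, j) * v $ j" if "i < m" "j < m" for i j
  proof (cases "i = j")
    case True
    then show ?thesis by (simp add: abs_mult_self_eq mult.commute mult.left_commute)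
  next
    case False
    then have "A $$ (i, j) \<le> 0" using offdiag that by blast
    with abs_ge_self[of "v $ i * v $ j"]
    have "A $$ (i, j) * (\<bar>v $ i\<bar> * \<bar>v $ j\<bar>) \<le> A $$ (i, j) * (v $ i * v $ j)"
      by (simp add: abs_mult mult_left_mono_neg)
    then show ?thesis by (simp add: mult_ac)
  qed
  with A v show ?thesis
    by (simp add: scalar_prod_mult_mat_vec_double_sum[of _ m m]) (auto intro!: sum_mono)
qed

lemma disjoint_bilinear_form_nonpos:
  fixes A :: "real mat"
  assumes A: "A \<in> carrier_mat m m" and offdiag: "\<forall>i<m. \<forall>j<m. i \<noteq> j \<longrightarrow> A $$ (i, j) \<le> 0"
    and u: "u \<in> carrier_vec m" "nonneg_vec m u" and p: "p \<in> carrier_vec m" "nonneg_vec m p"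
    and disjoint: "\<forall>i<m. u $ i * p $ i = 0"
  shows "u \<bullet> (A *\<^sub>v p) \<le> 0"
proof -
  have "u $ i * A $$ (i, j) * p $ j \<le> 0" if "i < m" "j < m" for i j
  proof (cases "i = j")
    case True
    then have "u $ i * A $$ (i, j) * p $ j = A $$ (i, j) * (u $ i * p $ i)" by (simp add: mult_ac)
    moreover have "u $ i * p $ i = 0" using disjoint that(1) by blast
    ultimately show ?thesis by (simp only: mult_zero_right order_refl)
  next
    case False
    then have "A $$ (i, j) \<le> 0" using offdiag that by blast
    moreover have "0 \<le> u $ i * p $ j" using u p that by (simp add: nonneg_vec_def)
    ultimately show ?thesis by (metis mult.commute mult.left_commute mult_nonpos_nonneg)
  qed
  with A u p show ?thesis
    by (simp add: scalar_prod_mult_mat_vec_double_sum[of _ m m]) (auto intro!: sum_nonpos)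
qed

lemma gram_Z_matrix_kernel_trivial:
  fixes Z :: "real mat"
  assumes Z: "Z \<in> carrier_mat n m" and y: "y \<in> carrier_vec n"
    and offdiag: "\<forall>i<m. \<forall>j<m. i \<noteq> j \<longrightarrow> (transpose_mat Z * Z) $$ (i, j) \<le> 0"
    and pos: "\<forall>i<m. (transpose_mat Z *\<^sub>v y) $ i > 0"
    and v: "v \<in> carrier_vec m" and kernel: "(transpose_mat Z * Z) *\<^sub>v v = 0\<^sub>v m"
  shows "v = 0\<^sub>v m"
proof -
  let ?g = "map_vec abs v"
  have g: "?g \<in> carrier_vec m" using v by simp
  have "(Z *\<^sub>v ?g) \<bullet> (Z *\<^sub>v ?g) \<le> v \<bullet> ((transpose_mat Z * Z) *\<^sub>v v)"
    using gram_quadratic_form[OF Z g] abs_quadratic_form_le[OF _ offdiag v] Z by simp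
  also have "\<dots> = 0" using kernel v by simp
  finally have "(Z *\<^sub>v ?g) \<bullet> (Z *\<^sub>v ?g) = 0"
    using scalar_prod_self_nonneg[of "Z *\<^sub>v ?g"] by linarith
  then have "Z *\<^sub>v ?g = 0\<^sub>v n"
    using scalar_prod_self_eq_0 Z by fastforce
  then have "(transpose_mat Z *\<^sub>v y) \<bullet> ?g = 0"
    using transpose_vec_mult_scalar[OF Z g y] y by simp
  moreover have "transpose_mat Z *\<^sub>v y \<in> carrier_vec m" using Z by (intro carrier_vecI) simp
  moreover have "nonneg_vec m ?g" using v by (simp add: nonneg_vec_def)
  ultimately have "?g = 0\<^sub>v m"
    using eq_0_if_pos_scalar_prod_nonpos[OF _ pos g] by simp
  show ?thesis
  proof (rule eq_vecI)
    fix i assume "i < dim_vec (0\<^sub>v m :: real vec)"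
    then have "i < m" by simp
    with arg_cong[OF \<open>?g = 0\<^sub>v m\<close>, of "\<lambda>w. w $ i"] v show "v $ i = 0\<^sub>v m $ i" by simp
  qed (use v in simp)
qed

lemma psd_Z_matrix_solution_nonneg:
  fixes A :: "real mat"
  assumes A: "A \<in> carrier_mat m m" and offdiag: "\<forall>i<m. \<forall>j<m. i \<noteq> j \<longrightarrow> A $$ (i, j) \<le> 0"
    and psd: "\<forall>v\<in>carrier_vec m. 0 \<le> v \<bullet> (A *\<^sub>v v)"
    and s: "s \<in> carrier_vec m" "\<forall>i<m. s $ i > 0"
    and w: "w \<in> carrier_vec m" and solution: "A *\<^sub>v w = s"
  shows "nonneg_vec m w"
proof -
  define p where "p = map_vec (\<lambda>x. max x 0) w"
  define u where "u = map_vec (\<lambda>x. max (- x) 0) w"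
  have p: "p \<in> carrier_vec m" "nonneg_vec m p" and u: "u \<in> carrier_vec m" "nonneg_vec m u"
    using w by (auto simp: p_def u_def nonneg_vec_def)
  have "w = p - u"
    using w by (intro eq_vecI) (auto simp: p_def u_def)
  have "s \<bullet> u = u \<bullet> (A *\<^sub>v w)"
    using s u solution by (simp add: comm_scalar_prod[of s m])
  also have "\<dots> = u \<bullet> (A *\<^sub>v p) - u \<bullet> (A *\<^sub>v u)"
    using A p u \<open>w = p - u\<close> by (simp add: mult_minus_distrib_mat_vec scalar_prod_minus_distrib[of _ m])
  also have "\<dots> \<le> 0"
  proof -
    have "\<forall>i<m. u $ i * p $ i = 0" using w by (simp add: p_def u_def max_def)
    then have "u \<bullet> (A *\<^sub>v p) \<le> 0" by (rule disjoint_bilinear_form_nonpos[OF A offdiag u p])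
    moreover have "0 \<le> u \<bullet> (A *\<^sub>v u)" using psd u by blast
    ultimately show ?thesis by linarith
  qed
  finally have "u = 0\<^sub>v m"
    using eq_0_if_pos_scalar_prod_nonpos[OF s u] by simp
  have "0 \<le> w $ i" if "i < m" for i
  proof -
    have "u $ i = 0" using \<open>u = 0\<^sub>v m\<close> that by simp
    with that w show ?thesis by (simp add: u_def max_def split: if_splits)
  qed
  then show ?thesis by (simp add: nonneg_vec_def)
qed

lemma psd_Z_matrix_solution_pos:
  fixes A :: "real mat"
  assumes A: "A \<in> carrier_mat m m" and offdiag: "\<forall>i<m. \<forall>j<m. i \<noteq> j \<longrightarrow> A $$ (i, j) \<le> 0"
    and psd: "\<forall>v\<in>carrier_vec m. 0 \<le> v \<bullet> (A *\<^sub>v v)"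
    and s: "s \<in> carrier_vec m" "\<forall>i<m. s $ i > 0"
    and w: "w \<in> carrier_vec m" and solution: "A *\<^sub>v w = s"
  shows "\<forall>i<m. w $ i > 0"
proof (intro allI impI)
  have nonneg: "nonneg_vec m w"
    using assms by (rule psd_Z_matrix_solution_nonneg)
  fix i assume i: "i < m"
  show "w $ i > 0"
  proof (rule ccontr)
    assume "\<not> w $ i > 0"
    then have "w $ i = 0" using nonneg i by (force simp: nonneg_vec_def)
    have "s $ i = (\<Sum>j<m. A $$ (i, j) * w $ j)"
      using solution A w i by (auto simp: scalar_prod_def lessThan_atLeast0)
    also have "\<dots> \<le> 0"
    proof (rule sum_nonpos)
      fix j assume "j \<in> {..<m}"
      then show "A $$ (i, j) * w $ j \<le> 0"
        using offdiag i nonneg \<open>w $ i = 0\<close>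
        by (cases "j = i") (auto simp: nonneg_vec_def intro: mult_nonpos_nonneg)
    qed
    finally show False using s i by force
  qed
qed

lemma gram_Z_matrix_inverse:
  fixes Z :: "real mat" and y :: "real vec"
  defines "G \<equiv> transpose_mat Z * Z" and "s \<equiv> transpose_mat Z *\<^sub>v y"
  assumes Z: "Z \<in> carrier_mat n m" and y: "y \<in> carrier_vec n"
    and offdiag: "\<forall>i<m. \<forall>j<m. i \<noteq> j \<longrightarrow> G $$ (i, j) \<le> 0"
    and pos: "\<forall>i<m. s $ i > 0"
  obtains B where "mat_inverse G = Some B" "G * B = 1\<^sub>m m" "B * G = 1\<^sub>m m" "B \<in> carrier_mat m m"
    "\<forall>i<m. (B *\<^sub>v s) $ i > 0"
proof -
  have G: "G \<in> carrier_mat m m" using Z by (simp add: G_def)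
  have s: "s \<in> carrier_vec m" using Z by (simp add: s_def carrier_vecI)
  obtain B where B: "mat_inverse G = Some B" "G * B = 1\<^sub>m m" "B * G = 1\<^sub>m m" "B \<in> carrier_mat m m"
    using mat_inverse_if_kernel_trivial[OF G gram_Z_matrix_kernel_trivial[OF Z y]] offdiag pos
    unfolding G_def s_def by blast
  have psd: "\<forall>v\<in>carrier_vec m. 0 \<le> v \<bullet> (G *\<^sub>v v)"
    using gram_quadratic_form_nonneg[OF Z] unfolding G_def .
  have Bs: "B *\<^sub>v s \<in> carrier_vec m" using B(4) s by simp
  have "G *\<^sub>v (B *\<^sub>v s) = (G * B) *\<^sub>v s"
    using G B(4) s by (rule assoc_mult_mat_vec[symmetric])
  also have "\<dots> = s"
    using s by (simp only: B(2) one_mult_mat_vec)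
  finally have "\<forall>i<m. (B *\<^sub>v s) $ i > 0"
    by (rule psd_Z_matrix_solution_pos[OF G offdiag psd s pos Bs])
  with B that show ?thesis by blast
qed

lemma ode_field_mult_mat_vec:
  assumes "M \<in> carrier_mat d d" "\<theta> \<in> carrier_vec d"
  shows "ode_field d M r \<theta> = vec d (\<lambda>i. \<theta> $ i * (r $ i - (M *\<^sub>v \<theta>) $ i))"
  using assms by (intro eq_vecI) (simp_all add: ode_field_def scalar_prod_def lessThan_atLeast0)

lemma nonneg_vec_eq_0_outside_supp:
  assumes "nonneg_vec d \<theta>" "i < d" "i \<notin> supp_vec d \<theta>"
  shows "\<theta> $ i = 0"
  using assms by (auto simp: nonneg_vec_def supp_vec_def less_eq_real_def)

lemma nonneg_fixed_point_support_iff_restr: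
  assumes M: "M \<in> carrier_mat d d" and r: "r \<in> carrier_vec d" and I: "I \<subseteq> {..<d}"
  shows "is_fixed_point d M r \<theta> \<and> nonneg_vec d \<theta> \<and> supp_vec d \<theta> = I \<longleftrightarrow>
    \<theta> \<in> carrier_vec d \<and> (\<forall>i<d. i \<notin> I \<longrightarrow> \<theta> $ i = 0) \<and> (\<forall>i\<in>I. \<theta> $ i > 0) \<and>
    submatrix M I I *\<^sub>v vec_restr \<theta> I = vec_restr r I"
proof -
  have support: "nonneg_vec d \<theta> \<and> supp_vec d \<theta> = I \<longleftrightarrow>
      (\<forall>i<d. i \<notin> I \<longrightarrow> \<theta> $ i = 0) \<and> (\<forall>i\<in>I. \<theta> $ i > 0)"
    using I by (auto simp: nonneg_vec_def supp_vec_def less_le)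
  moreover have "ode_field d M r \<theta> = 0\<^sub>v d \<longleftrightarrow>
      submatrix M I I *\<^sub>v vec_restr \<theta> I = vec_restr r I"
    if \<theta>: "\<theta> \<in> carrier_vec d" and vanish: "\<forall>i<d. i \<notin> I \<longrightarrow> \<theta> $ i = 0"
      and pos: "\<forall>i\<in>I. \<theta> $ i > 0"
  proof -
    have "\<theta> $ i * (r $ i - (M *\<^sub>v \<theta>) $ i) = 0 \<longleftrightarrow> (i \<in> I \<longrightarrow> (M *\<^sub>v \<theta>) $ i = r $ i)"
      if "i < d" for i
      using vanish pos that by (cases "i \<in> I") auto
    then have "ode_field d M r \<theta> = 0\<^sub>v d \<longleftrightarrow> (\<forall>i\<in>I. (M *\<^sub>v \<theta>) $ i = r $ i)"
      using I unfolding ode_field_mult_mat_vec[OF M \<theta>] vec_eq_iff by auto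
    also have "\<dots> \<longleftrightarrow> vec_restr (M *\<^sub>v \<theta>) I = vec_restr r I"
      using M \<theta> r by (intro vec_restr_eq_iff[OF I, symmetric]) (auto intro: carrier_vecI)
    also have "vec_restr (M *\<^sub>v \<theta>) I = submatrix M I I *\<^sub>v vec_restr \<theta> I"
      by (rule vec_restr_mult_mat_vec_vanishing_outside[OF M \<theta> I vanish])
    finally show ?thesis .
  qed
  ultimately show ?thesis unfolding is_fixed_point_def by blast
qed

section \<open>Nonnegative fixed points of the Lotka-Volterra system\<close>

locale gram_lotka_volterra =
  fixes X :: "real mat" and y :: "real vec" and n d :: nat
    and M :: "real mat" and r :: "real vec"
  assumes X: "X \<in> carrier_mat n d" and y: "y \<in> carrier_vec n"
    and M_def: "M = transpose_mat X * X" and r_def: "r = transpose_mat X *\<^sub>v y"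
    and r_pos: "\<forall>i<d. r $ i > 0"
    and M_offdiag_nonpos: "\<forall>i<d. \<forall>j<d. i \<noteq> j \<longrightarrow> M $$ (i, j) \<le> 0"
begin

lemma M_carrier: "M \<in> carrier_mat d d"
  using X by (simp add: M_def)

lemma r_carrier: "r \<in> carrier_vec d"
  using X by (simp add: r_def carrier_vecI)

lemma principal_submatrix_inverse:
  assumes I: "I \<subseteq> {..<d}"
  obtains B where "mat_inverse (submatrix M I I) = Some B"
    "submatrix M I I * B = 1\<^sub>m (card I)" "B * submatrix M I I = 1\<^sub>m (card I)"
    "B \<in> carrier_mat (card I) (card I)" "\<forall>k<card I. (B *\<^sub>v vec_restr r I) $ k > 0"
proof -
  define Z where "Z = submatrix X UNIV I"
  have "dim_row Z = n" using X by (simp add: Z_def dim_submatrix)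
  moreover have "dim_col Z = card I"
    using X by (simp add: Z_def dim_submatrix restrict_lessThan_eq[OF I])
  ultimately have Z: "Z \<in> carrier_mat n (card I)" by (rule carrier_matI)
  have G: "submatrix M I I = transpose_mat Z * Z"
    unfolding M_def Z_def by (rule submatrix_gram)
  have s: "vec_restr r I = transpose_mat Z *\<^sub>v y"
    unfolding r_def Z_def using X y by (intro vec_restr_transpose_mult_mat_vec) simp
  note offdiag = submatrix_offdiag_nonpos[OF M_carrier M_offdiag_nonpos I]
  note pos = vec_restr_pos[OF r_carrier r_pos I]
  from gram_Z_matrix_inverse[OF Z y offdiag[unfolded G] pos[unfolded s]] that
  show ?thesis unfolding G s .
qed

lemma principal_submatrix_invertible:
  assumes "I \<subseteq> {..<d}"
  shows "invertible_mat (submatrix M I I)"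
proof -
  obtain B where "submatrix M I I * B = 1\<^sub>m (card I)" "B * submatrix M I I = 1\<^sub>m (card I)"
    "B \<in> carrier_mat (card I) (card I)"
    using principal_submatrix_inverse[OF assms] by blast
  with submatrix_carrier_mat[OF M_carrier assms assms] show ?thesis
    by (rule invertible_mat_if_inverse)
qed

lemma nonneg_fixed_point_restr_eq:
  assumes I: "I \<subseteq> {..<d}"
    and fixed_point: "is_fixed_point d M r \<theta> \<and> nonneg_vec d \<theta> \<and> supp_vec d \<theta> = I"
  shows "vec_restr \<theta> I = the (mat_inverse (submatrix M I I)) *\<^sub>v vec_restr r I"
proof -
  obtain B where B: "mat_inverse (submatrix M I I) = Some B"
    "B * submatrix M I I = 1\<^sub>m (card I)" "B \<in> carrier_mat (card I) (card I)"
    using principal_submatrix_inverse[OF I] by blast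
  have \<theta>: "\<theta> \<in> carrier_vec d"
    and eq: "submatrix M I I *\<^sub>v vec_restr \<theta> I = vec_restr r I"
    using fixed_point nonneg_fixed_point_support_iff_restr[OF M_carrier r_carrier I] by blast+
  have restr: "vec_restr \<theta> I \<in> carrier_vec (card I)"
    using \<theta> I by (rule vec_restr_carrier)
  then have "vec_restr \<theta> I = (B * submatrix M I I) *\<^sub>v vec_restr \<theta> I"
    using B(2) by simp
  also have "\<dots> = B *\<^sub>v vec_restr r I"
    using B(3) submatrix_carrier_mat[OF M_carrier I I] restr by (simp add: eq)
  finally show ?thesis using B(1) by simp
qed

lemma nonneg_fixed_point_support_iff_eq_extend:
  assumes I: "I \<subseteq> {..<d}"
  shows "is_fixed_point d M r \<theta> \<and> nonneg_vec d \<theta> \<and> supp_vec d \<theta> = I \<longleftrightarrow>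
    \<theta> = vec_extend d I (the (mat_inverse (submatrix M I I)) *\<^sub>v vec_restr r I)"
proof
  note iff = nonneg_fixed_point_support_iff_restr[OF M_carrier r_carrier I]
  assume fixed_point: "is_fixed_point d M r \<theta> \<and> nonneg_vec d \<theta> \<and> supp_vec d \<theta> = I"
  then have "\<theta> \<in> carrier_vec d" "\<forall>i<d. i \<notin> I \<longrightarrow> \<theta> $ i = 0"
    using iff by blast+
  then show "\<theta> = vec_extend d I (the (mat_inverse (submatrix M I I)) *\<^sub>v vec_restr r I)"
    using vec_extend_vec_restr[OF I] nonneg_fixed_point_restr_eq[OF I fixed_point] by metis
next
  obtain B where B: "mat_inverse (submatrix M I I) = Some B"
    "submatrix M I I * B = 1\<^sub>m (card I)" "B \<in> carrier_mat (card I) (card I)"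
    and pos: "\<forall>k<card I. (B *\<^sub>v vec_restr r I) $ k > 0"
    using principal_submatrix_inverse[OF I] by blast
  have s: "vec_restr r I \<in> carrier_vec (card I)"
    using r_carrier I by (rule vec_restr_carrier)
  have w: "B *\<^sub>v vec_restr r I \<in> carrier_vec (card I)" using B(3) s by simp
  assume "\<theta> = vec_extend d I (the (mat_inverse (submatrix M I I)) *\<^sub>v vec_restr r I)"
  then have \<theta>: "\<theta> = vec_extend d I (B *\<^sub>v vec_restr r I)" using B(1) by simp
  have restr: "vec_restr \<theta> I = B *\<^sub>v vec_restr r I"
    using vec_restr_vec_extend[OF I w] \<theta> by simp
  have "finite I" using I finite_subset by blast
  then have pos_on: "\<theta> $ i > 0" if "i \<in> I" for i
    using that I pos card_less_in_set by (auto simp: \<theta> vec_extend_def)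
  have "submatrix M I I *\<^sub>v vec_restr \<theta> I = (submatrix M I I * B) *\<^sub>v vec_restr r I"
    unfolding restr using submatrix_carrier_mat[OF M_carrier I I] B(3) s
    by (rule assoc_mult_mat_vec[symmetric])
  also have "\<dots> = vec_restr r I"
    using B(2) s by simp
  finally show "is_fixed_point d M r \<theta> \<and> nonneg_vec d \<theta> \<and> supp_vec d \<theta> = I"
    using pos_on unfolding nonneg_fixed_point_support_iff_restr[OF M_carrier r_carrier I]
    by (simp add: \<theta> vec_extend_def)
qed

lemma ex1_nonneg_fixed_point_support:
  assumes "I \<subseteq> {..<d}"
  shows "\<exists>!\<theta>. is_fixed_point d M r \<theta> \<and> nonneg_vec d \<theta> \<and> supp_vec d \<theta> = I"
  unfolding nonneg_fixed_point_support_iff_eq_extend[OF assms] by simp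

lemma card_nonneg_fixed_points: "card {\<theta>. is_fixed_point d M r \<theta> \<and> nonneg_vec d \<theta>} = 2 ^ d"
proof -
  let ?S = "{\<theta>. is_fixed_point d M r \<theta> \<and> nonneg_vec d \<theta>}"
  let ?fixed_point = "\<lambda>I. vec_extend d I (the (mat_inverse (submatrix M I I)) *\<^sub>v vec_restr r I)"
  have supp: "supp_vec d \<theta> \<subseteq> {..<d}" for \<theta>
    by (auto simp: supp_vec_def)
  have "bij_betw (supp_vec d) ?S (Pow {..<d})"
  proof (rule bij_betw_byWitness[where f' = ?fixed_point])
    show "\<forall>\<theta>\<in>?S. ?fixed_point (supp_vec d \<theta>) = \<theta>"
    proof
      fix \<theta> assume "\<theta> \<in> ?S"
      then have "is_fixed_point d M r \<theta> \<and> nonneg_vec d \<theta> \<and> supp_vec d \<theta> = supp_vec d \<theta>"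
        by simp
      then show "?fixed_point (supp_vec d \<theta>) = \<theta>"
        unfolding nonneg_fixed_point_support_iff_eq_extend[OF supp] by (rule sym)
    qed
    show "\<forall>I\<in>Pow {..<d}. supp_vec d (?fixed_point I) = I"
      using nonneg_fixed_point_support_iff_eq_extend by blast
    show "supp_vec d ` ?S \<subseteq> Pow {..<d}"
      using supp by blast
    show "?fixed_point ` Pow {..<d} \<subseteq> ?S"
      using nonneg_fixed_point_support_iff_eq_extend by blast
  qed
  then show ?thesis by (simp add: bij_betw_same_card card_Pow)
qed

end

theorem proposition2:
  fixes X :: "real mat" and y :: "real vec" and n d :: nat
    and M :: "real mat" and r :: "real vec"
  assumes X: "X \<in> carrier_mat n d" and y: "y \<in> carrier_vec n"
    and M_def: "M = transpose_mat X * X" and r_def: "r = transpose_mat X *\<^sub>v y"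
    and A1: "\<forall>i<d. r $ i > 0"
    and A2: "\<forall>i<d. \<forall>j<d. i \<noteq> j \<longrightarrow> M $$ (i, j) \<le> 0"
  shows "(\<forall>I \<subseteq> {0..<d}.
            invertible_mat (submatrix M I I) \<and>
            (\<exists>!\<theta>. is_fixed_point d M r \<theta> \<and> nonneg_vec d \<theta> \<and> supp_vec d \<theta> = I) \<and>
            (\<forall>\<theta>. is_fixed_point d M r \<theta> \<and> nonneg_vec d \<theta> \<and> supp_vec d \<theta> = I \<longrightarrow>
                 vec_restr \<theta> I = the (mat_inverse (submatrix M I I)) *\<^sub>v vec_restr r I \<and>
                 (\<forall>i<d. i \<notin> I \<longrightarrow> \<theta> $ i = 0)))
         \<and> card {\<theta>. is_fixed_point d M r \<theta> \<and> nonneg_vec d \<theta>} = 2 ^ d"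
proof -
  interpret gram_lotka_volterra X y n d M r
    using assms by unfold_locales
  show ?thesis
    using principal_submatrix_invertible ex1_nonneg_fixed_point_support
      nonneg_fixed_point_restr_eq nonneg_vec_eq_0_outside_supp card_nonneg_fixed_points
    by (auto simp: atLeast0LessThan)
qed

end
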